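(* Let $n\ge 2$, $N=\binom n2$, and let $w=w_1\cdots w_N$ be a word in the alphabet $[n-1]$. Then $w_1w_2\cdots w_N$ is a 132-avoiding sorting network of $\mathfrak S_n$ if and only if the reversed word $w_Nw_{N-1}\cdots w_1$ is a 132-avoiding sorting network of $\mathfrak S_n$.
   Context: For $i\in[n-1]$ let $s_i=(i,i+1)\in\mathfrak S_n$ be the adjacent transposition, and let $w_0\in\mathfrak S_n$ be the reverse permutation $w_0(i)=n+1-i$. A sorting network (of $\mathfrak S_n$) is a word $w=w_1\cdots w_N$, $N=\binom n2$, in the alphabet $[n-1]$ with $s_{w_1}s_{w_2}\cdots s_{w_N}=w_0$ (necessarily a reduced word). Intermediate permutations are $\sigma_0=\mathrm{id}$ and $\sigma_k=s_{w_1}\cdots s_{w_k}$, where the product is formed from the left so that, in one-line notation, $\sigma_k$ is obtained from $\sigma_{k-1}$ by swapping the entries in positions $w_k$ and $w_k+1$. A sorting network is 132-avoiding if every $\sigma_k$, $k\in[N]$, avoids the pattern 132 (in one-line notation). *)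

theory Defs
  imports Main
begin

text \<open>Permutations of [n] in one-line notation are lists of length n with entries 1..n.
  Positions are 1-indexed in the paper; list positions are 0-indexed here.\<close>

definition swap_adj :: "nat list \<Rightarrow> nat \<Rightarrow> nat list" where
  "swap_adj p i = p[i - 1 := p ! i, i := p ! (i - 1)]"
  \<comment> \<open>swap the entries in (1-indexed) positions i and i+1\<close>

definition id_perm :: "nat \<Rightarrow> nat list" where
  "id_perm n = [1..<n+1]"

definition rev_perm :: "nat \<Rightarrow> nat list" where
  "rev_perm n = rev [1..<n+1]"

text \<open>sigma n w k = s_{w_1} ... s_{w_k} in one-line notation\<close>
definition sigma :: "nat \<Rightarrow> nat list \<Rightarrow> nat \<Rightarrow> nat list" where
  "sigma n w k = foldl swap_adj (id_perm n) (take k w)"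

definition is_sorting_network :: "nat \<Rightarrow> nat list \<Rightarrow> bool" where
  "is_sorting_network n w \<longleftrightarrow>
     length w = n choose 2 \<and> (\<forall>a \<in> set w. 1 \<le> a \<and> a \<le> n - 1) \<and>
     sigma n w (length w) = rev_perm n"

definition contains_132 :: "nat list \<Rightarrow> bool" where
  "contains_132 p \<longleftrightarrow> (\<exists>i j k. i < j \<and> j < k \<and> k < length p \<and>
      p ! i < p ! k \<and> p ! k < p ! j)"

definition avoids_132 :: "nat list \<Rightarrow> bool" where
  "avoids_132 p \<longleftrightarrow> \<not> contains_132 p"

definition is_132_avoiding_sorting_network :: "nat \<Rightarrow> nat list \<Rightarrow> bool" where
  "is_132_avoiding_sorting_network n w \<longleftrightarrow>
     is_sorting_network n w \<and> (\<forall>k \<in> {1..length w}. avoids_132 (sigma n w k))"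

end

(* Running the reversed word from the reverse permutation retraces the original network, so its
   intermediate permutations are the complements x \<mapsto> n + 1 - x of the original ones in reverse
   order; complementation turns the pattern 132 into 312. It therefore suffices to show that the
   intermediate permutations of a 132-avoiding sorting network also avoid 312.
   A sorting network has exactly n choose 2 letters, so every swap creates an inversion and
   inversions are never undone. If c a b with a < b < c occurred in some intermediate permutation,
   look at the swap that created the inversion (a, c): just before it, a c were adjacent, and b,
   which is never inverted with a, stood to their right -- an occurrence of 132. *)

theory Submission
  imports Defs
begin

lemma length_swap_adj [simp]: "length (swap_adj p i) = length p"
  by (simp add: swap_adj_def)

lemma nth_swap_adj:
  assumes "1 \<le> i" "i < length p" "k < length p"
  shows "swap_adj p i ! k = p ! (if k = i - 1 then i else if k = i then i - 1 else k)"
  using assms by (auto simp: swap_adj_def nth_list_update)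

lemma swap_adj_swap_adj:
  assumes "1 \<le> i" "i < length p"
  shows "swap_adj (swap_adj p i) i = p"
  by (rule nth_equalityI) (use assms in \<open>auto simp: nth_swap_adj\<close>)

lemma swap_adj_map: "i < length p \<Longrightarrow> swap_adj (map f p) i = map f (swap_adj p i)"
  by (simp add: swap_adj_def map_update)

lemma distinct_swap_adj: "1 \<le> i \<Longrightarrow> i < length p \<Longrightarrow> distinct (swap_adj p i) = distinct p"
  and set_swap_adj: "1 \<le> i \<Longrightarrow> i < length p \<Longrightarrow> set (swap_adj p i) = set p"
  by (simp_all add: swap_adj_def)

definition precedes :: "nat list \<Rightarrow> nat \<Rightarrow> nat \<Rightarrow> bool" where
  "precedes p x y \<longleftrightarrow> (\<exists>k l. k < l \<and> l < length p \<and> p ! k = x \<and> p ! l = y)"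

text \<open>Inversions are pairs of values rather than of positions, so that they can be followed
  through the swaps of a network.\<close>

definition inversions :: "nat list \<Rightarrow> (nat \<times> nat) set" where
  "inversions p = {(a, b). a < b \<and> precedes p b a}"

lemma finite_inversions: "finite (inversions p)"
proof (rule finite_subset)
  show "inversions p \<subseteq> set p \<times> set p" by (auto simp: inversions_def precedes_def)
qed simp

lemma precedes_swap_adjD:
  assumes "1 \<le> i" "i < length p" "precedes (swap_adj p i) x y" "\<not> (x = p ! i \<and> y = p ! (i - 1))"
  shows "precedes p x y"
proof -
  define \<tau> where "\<tau> k = (if k = i - 1 then i else if k = i then i - 1 else k)" for k
  obtain k l where kl: "k < l" "l < length p" "p ! \<tau> k = x" "p ! \<tau> l = y"
    using assms(1-3) by (auto simp: precedes_def nth_swap_adj \<tau>_def)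
  have "\<not> (k = i - 1 \<and> l = i)" using assms(1,4) kl by (auto simp: \<tau>_def)
  then have "\<tau> k < \<tau> l" "\<tau> l < length p" using assms(1,2) kl by (auto simp: \<tau>_def)
  with kl show ?thesis unfolding precedes_def by blast
qed

lemma precedes_swap_adj:
  "1 \<le> i \<Longrightarrow> i < length p \<Longrightarrow> precedes (swap_adj p i) (p ! i) (p ! (i - 1))"
  unfolding precedes_def by (intro exI[of _ "i - 1"] exI[of _ i]) (auto simp: nth_swap_adj)

lemma inversions_swap_adj_ascent:
  assumes "1 \<le> i" "i < length p" "p ! (i - 1) < p ! i"
  shows "inversions (swap_adj p i) = insert (p ! (i - 1), p ! i) (inversions p)"
proof (intro equalityI subsetI)
  fix z assume "z \<in> inversions (swap_adj p i)"
  then show "z \<in> insert (p ! (i - 1), p ! i) (inversions p)"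
    using precedes_swap_adjD[OF assms(1,2)] by (auto simp: inversions_def)
next
  let ?q = "swap_adj p i"
  have q: "?q ! i = p ! (i - 1)" "?q ! (i - 1) = p ! i" "i < length ?q"
    using assms by (auto simp: nth_swap_adj)
  fix z assume z: "z \<in> insert (p ! (i - 1), p ! i) (inversions p)"
  show "z \<in> inversions ?q"
  proof (cases "z = (p ! (i - 1), p ! i)")
    case True
    then show ?thesis using precedes_swap_adj[OF assms(1,2)] assms(3) by (simp add: inversions_def)
  next
    case False
    then obtain a b where ab: "z = (a, b)" "a < b" "precedes (swap_adj ?q i) b a"
      using z swap_adj_swap_adj[OF assms(1,2)] by (auto simp: inversions_def)
    with q have "precedes ?q b a" using precedes_swap_adjD[OF assms(1) q(3)] assms(3) by auto
    with ab show ?thesis by (simp add: inversions_def)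
  qed
qed

lemma card_inversions_swap_adj_descent:
  assumes "1 \<le> i" "i < length p" "p ! i < p ! (i - 1)" "distinct p"
  shows "card (inversions (swap_adj p i)) < card (inversions p)"
proof -
  let ?q = "swap_adj p i"
  have q: "?q ! i = p ! (i - 1)" "?q ! (i - 1) = p ! i" "i < length ?q" "distinct ?q"
    using assms by (auto simp: nth_swap_adj distinct_swap_adj)
  have split: "inversions p = insert (?q ! (i - 1), ?q ! i) (inversions ?q)"
    using inversions_swap_adj_ascent[OF assms(1) q(3)] q(1,2) assms(3)
    by (simp add: swap_adj_swap_adj[OF assms(1,2)])
  have "(?q ! (i - 1), ?q ! i) \<notin> inversions ?q"
  proof
    assume "(?q ! (i - 1), ?q ! i) \<in> inversions ?q"
    then obtain k l where "k < l" "l < length ?q" "?q ! k = ?q ! i" "?q ! l = ?q ! (i - 1)"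
      by (auto simp: inversions_def precedes_def)
    with q(3,4) show False by (simp add: nth_eq_iff_index_eq)
  qed
  then show ?thesis using split finite_inversions by (simp add: card_insert_if)
qed

lemma precedes_asym: "distinct p \<Longrightarrow> precedes p x y \<Longrightarrow> \<not> precedes p y x"
  by (auto simp: precedes_def nth_eq_iff_index_eq)

lemma card_inversions_swap_adj_le:
  assumes "1 \<le> i" "i < length p" "distinct p"
  shows "card (inversions (swap_adj p i)) \<le> Suc (card (inversions p))"
proof (cases "p ! (i - 1) < p ! i")
  case True
  then show ?thesis
    using assms by (simp add: inversions_swap_adj_ascent card_insert_if finite_inversions)
next
  case False
  moreover have "p ! (i - 1) \<noteq> p ! i" using assms by (simp add: nth_eq_iff_index_eq)
  ultimately show ?thesis
    using card_inversions_swap_adj_descent[OF assms(1,2) _ assms(3)] by simp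
qed

lemma length_id_perm [simp]: "length (id_perm n) = n"
  by (simp add: id_perm_def)

lemma length_rev_perm [simp]: "length (rev_perm n) = n"
  by (simp add: rev_perm_def)

lemma nth_id_perm: "k < n \<Longrightarrow> id_perm n ! k = Suc k"
  by (simp add: id_perm_def del: upt_Suc)

lemma nth_rev_perm: "k < n \<Longrightarrow> rev_perm n ! k = n - k"
  by (simp add: rev_perm_def rev_nth del: upt_Suc)

lemma map_complement_rev_perm: "map (\<lambda>x. Suc n - x) (rev_perm n) = id_perm n"
  and map_complement_id_perm: "map (\<lambda>x. Suc n - x) (id_perm n) = rev_perm n"
  by (auto intro!: nth_equalityI simp: nth_rev_perm nth_id_perm)

lemma inversions_id_perm: "inversions (id_perm n) = {}"
  by (auto simp: inversions_def precedes_def nth_id_perm)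

lemma avoids_132_id_perm: "avoids_132 (id_perm n)"
  by (auto simp: avoids_132_def contains_132_def nth_id_perm)

lemma card_increasing_pairs: "card {(a, b). 1 \<le> a \<and> a < b \<and> b \<le> n} = n choose 2"
proof (induction n)
  case 0
  have empty: "{(a, b). Suc 0 \<le> a \<and> a < b \<and> b = (0::nat)} = {}" by auto
  show ?case by (simp add: empty)
next
  case (Suc n)
  let ?P = "{(a, b). 1 \<le> a \<and> a < b \<and> b \<le> n}" and ?T = "(\<lambda>a. (a, Suc n)) ` {1..n}"
  have "{(a, b). 1 \<le> a \<and> a < b \<and> b \<le> Suc n} = ?P \<union> ?T" by auto
  moreover have "finite ?P" by (rule finite_subset[of _ "{1..n} \<times> {1..n}"]) auto
  moreover have "?P \<inter> ?T = {}" by auto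
  moreover have "card ?T = n" by (subst card_image) (auto simp: inj_on_def)
  ultimately show ?case using Suc.IH by (simp add: card_Un_disjoint numeral_2_eq_2)
qed

lemma card_inversions_rev_perm: "n choose 2 \<le> card (inversions (rev_perm n))"
proof -
  have "{(a, b). 1 \<le> a \<and> a < b \<and> b \<le> n} \<subseteq> inversions (rev_perm n)"
  proof clarify
    fix a b assume ab: "1 \<le> a" "a < b" "b \<le> n"
    have "precedes (rev_perm n) b a" unfolding precedes_def
      by (intro exI[of _ "n - b"] exI[of _ "n - a"]) (use ab in \<open>auto simp: nth_rev_perm\<close>)
    with ab show "(a, b) \<in> inversions (rev_perm n)" by (simp add: inversions_def)
  qed
  from card_mono[OF finite_inversions this] show ?thesis
    unfolding card_increasing_pairs .
qed

definition contains_312 :: "nat list \<Rightarrow> bool" where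
  "contains_312 p \<longleftrightarrow> (\<exists>i j k. i < j \<and> j < k \<and> k < length p \<and> p ! j < p ! k \<and> p ! k < p ! i)"

lemma contains_132_map_complement:
  assumes "\<forall>x \<in> set p. x \<le> n"
  shows "contains_132 (map (\<lambda>x. Suc n - x) p) \<longleftrightarrow> contains_312 p"
proof -
  have rev_less: "Suc n - p ! i < Suc n - p ! j \<longleftrightarrow> p ! j < p ! i"
    if "i < length p" "j < length p" for i j
    using assms nth_mem[OF that(1)] nth_mem[OF that(2)] by auto
  show ?thesis
  proof
    assume "contains_132 (map (\<lambda>x. Suc n - x) p)"
    then obtain i j k where ijk: "i < j" "j < k" "k < length p"
      "Suc n - p ! i < Suc n - p ! k" "Suc n - p ! k < Suc n - p ! j"
      unfolding contains_132_def by auto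
    with rev_less[of i k] rev_less[of k j] show "contains_312 p"
      unfolding contains_312_def by (intro exI[of _ i] exI[of _ j] exI[of _ k]) simp
  next
    assume "contains_312 p"
    then obtain i j k where ijk: "i < j" "j < k" "k < length p" "p ! j < p ! k" "p ! k < p ! i"
      unfolding contains_312_def by blast
    with rev_less[of i k] rev_less[of k j] show "contains_132 (map (\<lambda>x. Suc n - x) p)"
      unfolding contains_132_def by (intro exI[of _ i] exI[of _ j] exI[of _ k]) simp
  qed
qed

lemma contains_132_ascent:
  assumes "distinct p" "1 \<le> i" "i < length p" "b \<in> set p"
    and "p ! (i - 1) < b" "b < p ! i" "\<not> precedes p b (p ! (i - 1))"
  shows "contains_132 p"
proof -
  obtain m where m: "m < length p" "p ! m = b" using assms(4) by (metis in_set_conv_nth)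
  have "m \<noteq> i - 1" "m \<noteq> i" using m assms(5,6) by auto
  moreover have "\<not> m < i - 1"
    using m assms(3,7) unfolding precedes_def by (metis less_imp_diff_less)
  ultimately have "i < m" by linarith
  with m assms show ?thesis
    unfolding contains_132_def by (intro exI[of _ "i - 1"] exI[of _ i] exI[of _ m]) auto
qed

lemma sigma_0 [simp]: "sigma n w 0 = id_perm n"
  by (simp add: sigma_def)

lemma sigma_Suc: "j < length w \<Longrightarrow> sigma n w (Suc j) = swap_adj (sigma n w j) (w ! j)"
  by (simp add: sigma_def take_Suc_conv_app_nth)

locale sorting_network =
  fixes n :: nat and w :: "nat list"
  assumes sorting_network: "is_sorting_network n w"
begin

abbreviation \<sigma> :: "nat \<Rightarrow> nat list" where
  "\<sigma> k \<equiv> sigma n w k"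

lemma length_word: "length w = n choose 2"
  and sigma_length_word: "\<sigma> (length w) = rev_perm n"
  using sorting_network unfolding is_sorting_network_def by blast+

lemma letter_bounds: "t < length w \<Longrightarrow> 1 \<le> w ! t \<and> w ! t < n"
  using sorting_network nth_mem[of t w] unfolding is_sorting_network_def by fastforce

lemma sigma_permutation:
  "k \<le> length w \<Longrightarrow> length (\<sigma> k) = n \<and> distinct (\<sigma> k) \<and> set (\<sigma> k) = {1..n}"
proof (induction k)
  case 0
  then show ?case by (auto simp: id_perm_def)
next
  case (Suc k)
  with letter_bounds[of k] show ?case by (simp add: sigma_Suc distinct_swap_adj set_swap_adj)
qed

lemma card_inversions_sigma_le:
  assumes "j \<le> k" "k \<le> length w"
  shows "card (inversions (\<sigma> k)) \<le> card (inversions (\<sigma> j)) + (k - j)"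
  using assms
proof (induction k rule: dec_induct)
  case base
  then show ?case by simp
next
  case (step m)
  then show ?case
    using card_inversions_swap_adj_le[of "w ! m" "\<sigma> m"] letter_bounds[of m] sigma_permutation[of m]
    by (simp add: sigma_Suc)
qed

text \<open>At the end there are \<open>n choose 2 = length w\<close> inversions, and each step adds at
  most one, so no step may lose one.\<close>

lemma sigma_ascent:
  assumes "t < length w"
  shows "\<sigma> t ! (w ! t - 1) < \<sigma> t ! (w ! t)"
proof (rule ccontr)
  assume "\<not> ?thesis"
  moreover have "\<sigma> t ! (w ! t - 1) \<noteq> \<sigma> t ! (w ! t)"
  proof -
    have "distinct (\<sigma> t)" "w ! t - 1 < length (\<sigma> t)" "w ! t < length (\<sigma> t)" "w ! t - 1 \<noteq> w ! t"
      using assms letter_bounds[of t] sigma_permutation[of t] by auto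
    then show ?thesis by (simp add: nth_eq_iff_index_eq)
  qed
  ultimately have "card (inversions (\<sigma> (Suc t))) < card (inversions (\<sigma> t))"
    using assms letter_bounds[of t] sigma_permutation[of t]
    by (simp add: sigma_Suc card_inversions_swap_adj_descent)
  moreover have "card (inversions (\<sigma> t)) \<le> t"
    using card_inversions_sigma_le[of 0 t] assms by (simp add: inversions_id_perm)
  moreover have
    "card (inversions (\<sigma> (length w))) \<le> card (inversions (\<sigma> (Suc t))) + (length w - Suc t)"
    using card_inversions_sigma_le assms by simp
  moreover have "length w \<le> card (inversions (\<sigma> (length w)))"
    by (metis sigma_length_word length_word card_inversions_rev_perm)
  ultimately show False using assms by linarith
qed

lemma inversions_sigma_Suc:
  "t < length w \<Longrightarrow>
    inversions (\<sigma> (Suc t)) = insert (\<sigma> t ! (w ! t - 1), \<sigma> t ! (w ! t)) (inversions (\<sigma> t))"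
  using inversions_swap_adj_ascent letter_bounds sigma_permutation sigma_ascent by (simp add: sigma_Suc)

lemma inversions_sigma_mono:
  "t \<le> k \<Longrightarrow> k \<le> length w \<Longrightarrow> inversions (\<sigma> t) \<subseteq> inversions (\<sigma> k)"
proof (induction k rule: dec_induct)
  case base
  then show ?case by simp
next
  case (step m)
  then show ?case using inversions_sigma_Suc[of m] by auto
qed

lemma inversion_created:
  "j \<le> length w \<Longrightarrow> z \<in> inversions (\<sigma> j) \<Longrightarrow>
    \<exists>t < j. z \<notin> inversions (\<sigma> t) \<and> z \<in> inversions (\<sigma> (Suc t))"
proof (induction j)
  case 0
  then show ?case by (simp add: inversions_id_perm)
next
  case (Suc j)
  then show ?case by (cases "z \<in> inversions (\<sigma> j)") (auto dest: less_SucI)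
qed

lemma not_contains_312_sigma:
  assumes avoid: "\<forall>k \<in> {1..length w}. avoids_132 (\<sigma> k)" and "j \<le> length w"
  shows "\<not> contains_312 (\<sigma> j)"
proof
  assume "contains_312 (\<sigma> j)"
  then obtain i l m where iml: "i < l" "l < m" "m < length (\<sigma> j)"
    "\<sigma> j ! l < \<sigma> j ! m" "\<sigma> j ! m < \<sigma> j ! i"
    unfolding contains_312_def by blast
  define a b c where "a = \<sigma> j ! l" and "b = \<sigma> j ! m" and "c = \<sigma> j ! i"
  have perm_j: "distinct (\<sigma> j)" "set (\<sigma> j) = {1..n}" using sigma_permutation assms(2) by auto
  have "precedes (\<sigma> j) c a" "precedes (\<sigma> j) a b"
    unfolding precedes_def a_def b_def c_def using iml by (metis less_trans)+
  then have "(a, c) \<in> inversions (\<sigma> j)" and ab_j: "(a, b) \<notin> inversions (\<sigma> j)"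
    using iml perm_j(1) precedes_asym by (auto simp: a_def b_def c_def inversions_def)
  then obtain t where t: "t < j" "(a, c) \<notin> inversions (\<sigma> t)" "(a, c) \<in> inversions (\<sigma> (Suc t))"
    using inversion_created assms(2) by blast
  have t_len: "t < length w" using t assms(2) by simp
  have ac: "a = \<sigma> t ! (w ! t - 1)" "c = \<sigma> t ! (w ! t)"
    using t inversions_sigma_Suc[OF t_len] by auto
  have "(a, b) \<notin> inversions (\<sigma> t)"
    using ab_j inversions_sigma_mono[of t j] t assms(2) by auto
  moreover have "b \<in> set (\<sigma> t)" "distinct (\<sigma> t)"
    using sigma_permutation[of t] perm_j iml t_len by (auto simp: a_def b_def c_def)
  ultimately have "contains_132 (\<sigma> t)"
    using contains_132_ascent[of "\<sigma> t" "w ! t" b] ac iml letter_bounds[OF t_len]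
      sigma_permutation[of t] t_len by (auto simp: a_def b_def c_def inversions_def)
  moreover have "t \<noteq> 0"
    using calculation avoids_132_id_perm[of n] by (cases t) (auto simp: avoids_132_def)
  ultimately show False using avoid t_len by (auto simp: avoids_132_def)
qed

lemma sigma_rev:
  "k \<le> length w \<Longrightarrow> sigma n (rev w) k = map (\<lambda>x. Suc n - x) (\<sigma> (length w - k))"
proof (induction k)
  case 0
  then show ?case by (simp add: sigma_length_word map_complement_rev_perm)
next
  case (Suc k)
  define j where "j = length w - Suc k"
  have j: "j < length w" "length w - k = Suc j" "rev w ! k = w ! j"
    using Suc.prems by (auto simp: j_def rev_nth)
  have "sigma n (rev w) (Suc k) = swap_adj (map (\<lambda>x. Suc n - x) (swap_adj (\<sigma> j) (w ! j))) (w ! j)"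
    using Suc j by (simp add: sigma_Suc)
  also have "\<dots> = map (\<lambda>x. Suc n - x) (\<sigma> j)"
    using letter_bounds[OF j(1)] sigma_permutation[of j] j(1)
    by (simp add: swap_adj_map swap_adj_swap_adj)
  finally show ?case by (simp add: j_def)
qed

lemma is_132_avoiding_rev:
  assumes "\<forall>k \<in> {1..length w}. avoids_132 (\<sigma> k)"
  shows "is_132_avoiding_sorting_network n (rev w)"
  unfolding is_132_avoiding_sorting_network_def is_sorting_network_def
proof (intro conjI ballI)
  show "length (rev w) = n choose 2" "sigma n (rev w) (length (rev w)) = rev_perm n"
    using sigma_rev[of "length w"] by (simp_all add: length_word map_complement_id_perm)
  show "1 \<le> a" "a \<le> n - 1" if "a \<in> set (rev w)" for a
    using that sorting_network by (auto simp: is_sorting_network_def)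
  fix k assume "k \<in> {1..length (rev w)}"
  moreover have "\<forall>x \<in> set (\<sigma> (length w - k)). x \<le> n"
    using sigma_permutation[of "length w - k"] by auto
  ultimately show "avoids_132 (sigma n (rev w) k)"
    using sigma_rev contains_132_map_complement not_contains_312_sigma[OF assms]
    by (simp add: avoids_132_def)
qed

end

lemma is_132_avoiding_sorting_network_rev:
  assumes "is_132_avoiding_sorting_network n w"
  shows "is_132_avoiding_sorting_network n (rev w)"
proof -
  interpret sorting_network n w
    using assms by unfold_locales (simp add: is_132_avoiding_sorting_network_def)
  show ?thesis
    using assms by (intro is_132_avoiding_rev) (simp add: is_132_avoiding_sorting_network_def)
qed

theorem mainTheorem1:
  fixes n :: nat and w :: "nat list"
  assumes "n \<ge> 2"
    and "length w = n choose 2"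
    and "\<forall>a \<in> set w. 1 \<le> a \<and> a \<le> n - 1"
  shows "is_132_avoiding_sorting_network n w \<longleftrightarrow> is_132_avoiding_sorting_network n (rev w)"
proof
  assume "is_132_avoiding_sorting_network n w"
  then show "is_132_avoiding_sorting_network n (rev w)" by (rule is_132_avoiding_sorting_network_rev)
next
  assume "is_132_avoiding_sorting_network n (rev w)"
  then show "is_132_avoiding_sorting_network n w"
    using is_132_avoiding_sorting_network_rev[of n "rev w"] by simp
qed

end
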